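(* There are absolute constants $c>0$ and $n_0$ such that for every $n\ge n_0$ and every integer $G$ with $1\le G\le 2^{n/4}$, there exists a Boolean function $f:\{0,1\}^n\to\{0,1\}$ that is computed by some formula on $n$ input variables with at most $G$ gates, but every formula computing $f$ has formula size at least $c\,nG/\log n$.
   Context: A formula on input variables $x_1,\dots,x_n$ is a rooted tree whose leaves are labeled by input variables (the same variable may label many leaves) and whose internal vertices are \textsc{not} gates (fanin 1) or unbounded-fanin \textsc{and}/\textsc{or} gates. The formula size is the number of leaves (inputs counted with multiplicity); the gate count is the number of \textsc{and} and \textsc{or} gates. *)

theory Defs
  imports Complex_Main
begin

datatype formula = Var nat | Neg formula | AndG "formula list" | OrG "formula list"

fun eval :: "formula \<Rightarrow> (nat \<Rightarrow> bool) \<Rightarrow> bool" where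
  "eval (Var i) x = x i"
| "eval (Neg \<phi>) x = (\<not> eval \<phi> x)"
| "eval (AndG \<phi>s) x = (\<forall>\<phi>\<in>set \<phi>s. eval \<phi> x)"
| "eval (OrG \<phi>s) x = (\<exists>\<phi>\<in>set \<phi>s. eval \<phi> x)"

fun fsize :: "formula \<Rightarrow> nat" where
  "fsize (Var i) = 1"
| "fsize (Neg \<phi>) = fsize \<phi>"
| "fsize (AndG \<phi>s) = sum_list (map fsize \<phi>s)"
| "fsize (OrG \<phi>s) = sum_list (map fsize \<phi>s)"

fun gates :: "formula \<Rightarrow> nat" where
  "gates (Var i) = 0"
| "gates (Neg \<phi>) = gates \<phi>"
| "gates (AndG \<phi>s) = Suc (sum_list (map gates \<phi>s))"
| "gates (OrG \<phi>s) = Suc (sum_list (map gates \<phi>s))"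

fun vars :: "formula \<Rightarrow> nat set" where
  "vars (Var i) = {i}"
| "vars (Neg \<phi>) = vars \<phi>"
| "vars (AndG \<phi>s) = (\<Union>\<phi>\<in>set \<phi>s. vars \<phi>)"
| "vars (OrG \<phi>s) = (\<Union>\<phi>\<in>set \<phi>s. vars \<phi>)"

definition computes :: "nat \<Rightarrow> formula \<Rightarrow> (bool list \<Rightarrow> bool) \<Rightarrow> bool" where
  "computes n \<phi> f \<longleftrightarrow> vars \<phi> \<subseteq> {..<n} \<and>
     (\<forall>xs. length xs = n \<longrightarrow> eval \<phi> (\<lambda>i. xs ! i) = f xs)"

end

theory Submission
  imports Defs "HOL-Library.FuncSet"
begin

text \<open>
  Fix \<open>k = n div 4 + 1\<close> and \<open>m = max 1 (G - 1) \<le> 2^k\<close>.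
  For every choice of sets \<open>S j \<subseteq> {k..<n}\<close>, \<open>j < m\<close>, the DNF whose \<open>j\<close>-th term checks that
  the first \<open>k\<close> inputs spell \<open>j\<close> in binary and that all inputs in \<open>S j\<close> are true is a
  formula with at most \<open>G\<close> gates, and different choices give different functions; so
  there are \<open>2^((n - k) m) \<ge> 2^(nG/4)\<close> such functions.  On the other hand every formula
  of size \<open>s\<close> can be normalized to an equivalent one with at most \<open>4 s + 1\<close> vertices, and
  such formulas are encoded injectively by words of length \<open>\<le> 8 s + 2\<close> over \<open>n + 4\<close>
  letters, so at most \<open>(n + 4)^(8 s + 3)\<close> functions have formula size \<open>\<le> s\<close>.  For
  \<open>s = nG/(800 ln n)\<close> and \<open>n \<ge> 50000\<close> this number is smaller, so some DNF of the family
  needs formula size larger than \<open>s\<close>.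
\<close>

section \<open>Normal forms whose size is bounded by the formula size\<close>

text \<open>Formula size counts leaves only, so a formula of small size may still be a huge
  tree (negation chains, empty gates, gates of fanin one).  We normalize formulas
  without changing their function, their variables or increasing their size, so that
  the result has at most \<open>4 s + 1\<close> vertices.\<close>

fun nodes :: "formula \<Rightarrow> nat" where
  "nodes (Var i) = 1"
| "nodes (Neg \<phi>) = Suc (nodes \<phi>)"
| "nodes (AndG \<phi>s) = Suc (sum_list (map nodes \<phi>s))"
| "nodes (OrG \<phi>s) = Suc (sum_list (map nodes \<phi>s))"

(* AND and OR treated uniformly: Gate True is AND, Gate False is OR; Gate b [] is the
   constant b. *)
definition Gate :: "bool \<Rightarrow> formula list \<Rightarrow> formula" where
  "Gate b = (if b then AndG else OrG)"

lemma Gate_simps [simp]: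
  "eval (Gate b \<psi>s) x \<longleftrightarrow> (if b then \<forall>\<psi>\<in>set \<psi>s. eval \<psi> x else \<exists>\<psi>\<in>set \<psi>s. eval \<psi> x)"
  "vars (Gate b \<psi>s) = (\<Union>\<psi>\<in>set \<psi>s. vars \<psi>)"
  "fsize (Gate b \<psi>s) = sum_list (map fsize \<psi>s)"
  "gates (Gate b \<psi>s) = Suc (sum_list (map gates \<psi>s))"
  "nodes (Gate b \<psi>s) = Suc (sum_list (map nodes \<psi>s))"
  by (simp_all add: Gate_def)

fun collapse :: "bool \<Rightarrow> formula list \<Rightarrow> formula" where
  "collapse b [\<psi>] = \<psi>"
| "collapse b \<psi>s = Gate b \<psi>s"

lemma collapse_simps [simp]:
  "eval (collapse b \<psi>s) x = eval (Gate b \<psi>s) x"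
  "vars (collapse b \<psi>s) = vars (Gate b \<psi>s)"
  "fsize (collapse b \<psi>s) = fsize (Gate b \<psi>s)"
  by (induction b \<psi>s rule: collapse.induct) auto

(* Smart gate constructor: an absorbing constant child makes the gate that constant,
   neutral constant children are dropped. *)
definition mk_gate :: "bool \<Rightarrow> formula list \<Rightarrow> formula" where
  "mk_gate b \<psi>s = (if Gate (\<not> b) [] \<in> set \<psi>s then Gate (\<not> b) []
                  else collapse b (filter (\<lambda>\<psi>. \<psi> \<noteq> Gate b []) \<psi>s))"

fun negate :: "formula \<Rightarrow> formula" where
  "negate (Neg \<psi>) = \<psi>"
| "negate (AndG []) = OrG []"
| "negate (OrG []) = AndG []"
| "negate \<psi> = Neg \<psi>"

fun normalize :: "formula \<Rightarrow> formula" where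
  "normalize (Var i) = Var i"
| "normalize (Neg \<phi>) = negate (normalize \<phi>)"
| "normalize (AndG \<phi>s) = mk_gate True (map normalize \<phi>s)"
| "normalize (OrG \<phi>s) = mk_gate False (map normalize \<phi>s)"

lemma eval_mk_gate: "eval (mk_gate b \<psi>s) x = eval (Gate b \<psi>s) x"
  by (cases b) (force simp: mk_gate_def)+

lemma vars_mk_gate: "vars (mk_gate b \<psi>s) \<subseteq> vars (Gate b \<psi>s)"
  by (auto simp: mk_gate_def)

lemma fsize_mk_gate: "fsize (mk_gate b \<psi>s) \<le> fsize (Gate b \<psi>s)"
  by (auto simp: mk_gate_def sum_list_filter_le_nat)

lemma negate_simps [simp]:
  "eval (negate \<psi>) x = (\<not> eval \<psi> x)" "vars (negate \<psi>) = vars \<psi>" "fsize (negate \<psi>) = fsize \<psi>"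
  by (induction \<psi> rule: negate.induct) auto

lemma eval_normalize: "eval (normalize \<phi>) x = eval \<phi> x"
  by (induction \<phi> rule: normalize.induct) (simp_all add: eval_mk_gate)

lemma vars_normalize: "vars (normalize \<phi>) \<subseteq> vars \<phi>"
  by (induction \<phi> rule: normalize.induct) (use vars_mk_gate in fastforce)+

lemma fsize_normalize: "fsize (normalize \<phi>) \<le> fsize \<phi>"
proof (induction \<phi> rule: normalize.induct)
  case (3 \<phi>s)
  have "fsize (normalize (AndG \<phi>s)) \<le> sum_list (map (fsize \<circ> normalize) \<phi>s)"
    using fsize_mk_gate[of True "map normalize \<phi>s"] by simp
  also have "\<dots> \<le> fsize (AndG \<phi>s)" using 3 by (simp add: sum_list_mono)
  finally show ?case .
next
  case (4 \<phi>s)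
  have "fsize (normalize (OrG \<phi>s)) \<le> sum_list (map (fsize \<circ> normalize) \<phi>s)"
    using fsize_mk_gate[of False "map normalize \<phi>s"] by simp
  also have "\<dots> \<le> fsize (OrG \<phi>s)" using 4 by (simp add: sum_list_mono)
  finally show ?case .
qed simp_all

(* The invariant of normalized formulas: a constant, or few vertices per leaf.  A top
   negation is allowed one extra vertex. *)
fun is_neg :: "formula \<Rightarrow> bool" where
  "is_neg (Neg _) = True"
| "is_neg _ = False"

definition reduced :: "formula \<Rightarrow> bool" where
  "reduced \<psi> \<longleftrightarrow> (\<exists>b. \<psi> = Gate b []) \<or>
     nodes \<psi> + 3 \<le> 4 * fsize \<psi> + (if is_neg \<psi> then 1 else 0)"

lemma nodes_children:
  assumes "\<forall>\<psi>\<in>set \<psi>s. reduced \<psi> \<and> (\<forall>b. \<psi> \<noteq> Gate b [])"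
  shows "sum_list (map nodes \<psi>s) + 2 * length \<psi>s \<le> 4 * sum_list (map fsize \<psi>s)"
  using assms
proof (induction \<psi>s)
  case (Cons \<psi> \<psi>s)
  then have "nodes \<psi> + 2 \<le> 4 * fsize \<psi>"
    by (auto simp: reduced_def split: if_splits)
  with Cons show ?case by simp
qed simp

lemma collapse_Gate: "length \<psi>s \<noteq> 1 \<Longrightarrow> collapse b \<psi>s = Gate b \<psi>s"
  by (induction b \<psi>s rule: collapse.induct) auto

(* A gate of fanin at least two over such children has at most 4 s - 3 vertices. *)
lemma reduced_collapse:
  assumes "\<forall>\<psi>\<in>set \<psi>s. reduced \<psi> \<and> (\<forall>b. \<psi> \<noteq> Gate b [])"
  shows "reduced (collapse b \<psi>s)"
proof -
  consider "\<psi>s = []" | \<psi> where "\<psi>s = [\<psi>]" | "length \<psi>s \<ge> 2"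
    by (metis One_nat_def length_0_conv length_Suc_conv less_2_cases not_le)
  then show ?thesis
  proof cases
    case 3
    with nodes_children[OF assms] have "nodes (Gate b \<psi>s) + 3 \<le> 4 * fsize (Gate b \<psi>s)"
      by simp
    then show ?thesis using 3 by (simp add: reduced_def Gate_def collapse_Gate)
  qed (use assms in \<open>auto simp: reduced_def\<close>)
qed

lemma reduced_mk_gate:
  assumes "\<forall>\<psi>\<in>set \<psi>s. reduced \<psi>"
  shows "reduced (mk_gate b \<psi>s)"
proof (cases "Gate (\<not> b) [] \<in> set \<psi>s")
  case True
  then show ?thesis by (auto simp: mk_gate_def reduced_def)
next
  case False
  have "\<forall>\<psi>\<in>set (filter (\<lambda>\<psi>. \<psi> \<noteq> Gate b []) \<psi>s). reduced \<psi> \<and> (\<forall>c. \<psi> \<noteq> Gate c [])"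
  proof
    fix \<psi> assume "\<psi> \<in> set (filter (\<lambda>\<psi>. \<psi> \<noteq> Gate b []) \<psi>s)"
    then show "reduced \<psi> \<and> (\<forall>c. \<psi> \<noteq> Gate c [])"
      using assms False by (cases b) (auto simp: Gate_def)
  qed
  then show ?thesis using False by (simp add: mk_gate_def reduced_collapse)
qed

lemma reduced_negate: "reduced \<psi> \<Longrightarrow> reduced (negate \<psi>)"
  by (induction \<psi> rule: negate.induct) (auto simp: reduced_def Gate_def split: if_splits)

lemma reduced_normalize: "reduced (normalize \<phi>)"
proof (induction \<phi> rule: normalize.induct)
  case (1 i)
  then show ?case by (simp add: reduced_def)
qed (simp_all add: reduced_negate reduced_mk_gate)

lemma nodes_normalize: "nodes (normalize \<phi>) \<le> 4 * fsize \<phi> + 1"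
  using reduced_normalize[of \<phi>] fsize_normalize[of \<phi>]
  by (auto simp: reduced_def split: if_splits)

section \<open>Counting formulas with few vertices\<close>

text \<open>The code is
  injective and has length at most twice the number of vertices, which bounds the number
  of formulas with \<open>L\<close> vertices by \<open>(n + 4)^(2 L + 1)\<close>.\<close>

fun enc :: "formula \<Rightarrow> nat list" where
  "enc (Var i) = [i + 4]"
| "enc (Neg \<phi>) = 0 # enc \<phi>"
| "enc (AndG \<phi>s) = 1 # concat (map enc \<phi>s) @ [3]"
| "enc (OrG \<phi>s) = 2 # concat (map enc \<phi>s) @ [3]"

lemma enc_not_closing: "\<exists>t ts. enc \<phi> = t # ts \<and> t \<noteq> 3"
  by (cases \<phi>) auto

(* Codes are prefix-free; for lists of formulas this follows from the property of
   the entries, since no code starts with the closing symbol. *)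
lemma concat_enc_unique:
  assumes head_unique: "\<And>\<phi> \<psi> r r'. \<phi> \<in> set \<phi>s \<Longrightarrow> enc \<phi> @ r = enc \<psi> @ r' \<Longrightarrow> \<phi> = \<psi> \<and> r = r'"
    and eq: "concat (map enc \<phi>s) @ 3 # r = concat (map enc \<psi>s) @ 3 # r'"
  shows "\<phi>s = \<psi>s \<and> r = r'"
  using assms
proof (induction \<phi>s arbitrary: \<psi>s r r')
  case Nil
  show ?case
  proof (cases \<psi>s)
    case (Cons \<psi> \<psi>s')
    obtain t ts where "enc \<psi> = t # ts" "t \<noteq> 3" using enc_not_closing by blast
    with Nil.prems(2) Cons have "3 # r = t # (ts @ concat (map enc \<psi>s') @ 3 # r')"
      by simp
    with \<open>t \<noteq> 3\<close> show ?thesis by simp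
  qed (use Nil.prems in simp)
next
  case (Cons \<phi> \<phi>s)
  show ?case
  proof (cases \<psi>s)
    case Nil
    obtain t ts where "enc \<phi> = t # ts" "t \<noteq> 3" using enc_not_closing by blast
    with Cons.prems(2) Nil have "t # (ts @ concat (map enc \<phi>s) @ 3 # r) = 3 # r'"
      by simp
    with \<open>t \<noteq> 3\<close> show ?thesis by simp
  next
    case (Cons \<psi> \<psi>s')
    with Cons.prems(2) have "enc \<phi> @ (concat (map enc \<phi>s) @ 3 # r)
        = enc \<psi> @ (concat (map enc \<psi>s') @ 3 # r')"
      by simp
    then have "\<phi> = \<psi>" and tail: "concat (map enc \<phi>s) @ 3 # r = concat (map enc \<psi>s') @ 3 # r'"
      using Cons.prems(1)[of \<phi>] by simp_all
    have "\<phi>s = \<psi>s' \<and> r = r'"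
    proof (rule Cons.IH[OF _ tail])
      fix \<phi>' \<psi>' u u' assume "\<phi>' \<in> set \<phi>s" "enc \<phi>' @ u = enc \<psi>' @ u'"
      then show "\<phi>' = \<psi>' \<and> u = u'" by (intro Cons.prems(1)) simp_all
    qed
    with \<open>\<phi> = \<psi>\<close> Cons show ?thesis by simp
  qed
qed

lemma enc_unique: "enc \<phi> @ r = enc \<psi> @ r' \<Longrightarrow> \<phi> = \<psi> \<and> r = r'"
proof (induction \<phi> arbitrary: \<psi> r r')
  case (Var i)
  then show ?case by (cases \<psi>) auto
next
  case (Neg \<phi>)
  then show ?case by (cases \<psi>) auto
next
  case (AndG \<phi>s)
  show ?case
  proof (cases \<psi>)
    case (AndG \<psi>s)
    with AndG.prems have "concat (map enc \<phi>s) @ 3 # r = concat (map enc \<psi>s) @ 3 # r'"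
      by simp
    with AndG show ?thesis using concat_enc_unique[OF AndG.IH] by simp
  qed (use AndG.prems in auto)
next
  case (OrG \<phi>s)
  show ?case
  proof (cases \<psi>)
    case (OrG \<psi>s)
    with OrG.prems have "concat (map enc \<phi>s) @ 3 # r = concat (map enc \<psi>s) @ 3 # r'"
      by simp
    with OrG show ?thesis using concat_enc_unique[OF OrG.IH] by simp
  qed (use OrG.prems in auto)
qed

lemma inj_enc: "inj enc"
  using enc_unique[where r = "[]" and r' = "[]"] by (auto intro: injI)

lemma length_enc: "length (enc \<phi>) \<le> 2 * nodes \<phi>"
proof (induction \<phi>)
  case (AndG \<phi>s)
  then have "length (concat (map enc \<phi>s)) \<le> sum_list (map (\<lambda>\<phi>. 2 * nodes \<phi>) \<phi>s)"
    by (simp add: length_concat comp_def sum_list_mono)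
  then show ?case by (simp add: sum_list_const_mult)
next
  case (OrG \<phi>s)
  then have "length (concat (map enc \<phi>s)) \<le> sum_list (map (\<lambda>\<phi>. 2 * nodes \<phi>) \<phi>s)"
    by (simp add: length_concat comp_def sum_list_mono)
  then show ?case by (simp add: sum_list_const_mult)
qed simp_all

lemma set_enc: "vars \<phi> \<subseteq> {..<n} \<Longrightarrow> set (enc \<phi>) \<subseteq> {..<n + 4}"
  by (induction \<phi>) fastforce+

(* Number of words of length at most M over b letters. *)
lemma sum_powers_le: "(b::nat) \<ge> 2 \<Longrightarrow> (\<Sum>i\<le>M. b ^ i) \<le> b ^ (M + 1)"
proof (induction M)
  case (Suc M)
  then have "(\<Sum>i\<le>Suc M. b ^ i) \<le> 2 * b ^ Suc M" by simp
  also have "\<dots> \<le> b ^ (Suc M + 1)" using Suc.prems by simp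
  finally show ?case .
qed simp

lemma card_formulas:
  fixes n L :: nat
  defines "P \<equiv> {\<phi>. vars \<phi> \<subseteq> {..<n} \<and> nodes \<phi> \<le> L}"
  shows "finite P" and "card P \<le> (n + 4) ^ (2 * L + 1)"
proof -
  let ?Ls = "{xs. set xs \<subseteq> {..<n + 4} \<and> length xs \<le> 2 * L}"
  have fin: "finite ?Ls" by (rule finite_lists_length_le) simp
  have sub: "enc ` P \<subseteq> ?Ls"
  proof
    fix xs assume "xs \<in> enc ` P"
    then obtain \<phi> where "xs = enc \<phi>" "vars \<phi> \<subseteq> {..<n}" "nodes \<phi> \<le> L"
      unfolding P_def by blast
    with set_enc[of \<phi> n] length_enc[of \<phi>] show "xs \<in> ?Ls" by auto
  qed
  have inj: "inj_on enc P" using inj_enc by (simp add: inj_on_def inj_def)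
  show "finite P" by (rule inj_on_finite[OF inj sub fin])
  have "card P \<le> card ?Ls" by (rule card_inj_on_le[OF inj sub fin])
  also have "\<dots> = (\<Sum>i\<le>2 * L. (n + 4) ^ i)" by (subst card_lists_length_le) simp_all
  also have "\<dots> \<le> (n + 4) ^ (2 * L + 1)" by (rule sum_powers_le) simp
  finally show "card P \<le> (n + 4) ^ (2 * L + 1)" .
qed

(* A function on bool lists viewed as a Boolean function on {0,1}^n: only inputs of
   length n matter. *)
definition restrict_cube :: "nat \<Rightarrow> (bool list \<Rightarrow> bool) \<Rightarrow> bool list \<Rightarrow> bool" where
  "restrict_cube n f xs \<longleftrightarrow> length xs = n \<and> f xs"

lemma card_small_size_family:
  assumes small: "\<forall>S\<in>I. \<exists>\<psi>. computes n \<psi> (F S) \<and> fsize \<psi> \<le> s"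
    and distinct: "inj_on (\<lambda>S. restrict_cube n (F S)) I"
  shows "card I \<le> (n + 4) ^ (8 * s + 3)"
proof -
  let ?P = "{\<phi>. vars \<phi> \<subseteq> {..<n} \<and> nodes \<phi> \<le> 4 * s + 1}"
  define E where "E \<phi> = restrict_cube n (\<lambda>xs. eval \<phi> (\<lambda>i. xs ! i))" for \<phi>
  have sub: "(\<lambda>S. restrict_cube n (F S)) ` I \<subseteq> E ` ?P"
  proof
    fix g assume "g \<in> (\<lambda>S. restrict_cube n (F S)) ` I"
    then obtain S \<psi> where g: "g = restrict_cube n (F S)"
      and \<psi>: "computes n \<psi> (F S)" "fsize \<psi> \<le> s"
      using small by blast
    have "normalize \<psi> \<in> ?P"
      using nodes_normalize[of \<psi>] vars_normalize[of \<psi>] \<psi> unfolding computes_def by auto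
    moreover have "g = E (normalize \<psi>)"
      using \<psi>(1) unfolding g E_def restrict_cube_def computes_def by (auto simp: eval_normalize)
    ultimately show "g \<in> E ` ?P" by blast
  qed
  have "card I = card ((\<lambda>S. restrict_cube n (F S)) ` I)"
    by (rule card_image[OF distinct, symmetric])
  also have "\<dots> \<le> card ?P"
    using sub card_formulas(1) by (meson card_image_le card_mono finite_imageI order.trans)
  also have "\<dots> \<le> (n + 4) ^ (2 * (4 * s + 1) + 1)"
    by (rule card_formulas(2))
  also have "\<dots> = (n + 4) ^ (8 * s + 3)"
    by (rule arg_cong[where f = "(^) (n + 4)"]) simp
  finally show ?thesis .
qed

section \<open>A large family of functions with few gates\<close>

lemma eval_cong_vars: "(\<And>i. i \<in> vars \<phi> \<Longrightarrow> x i = y i) \<Longrightarrow> eval \<phi> x = eval \<phi> y"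
  by (induction \<phi>) auto

(* Numbers below 2^k are determined by their first k bits: the address part of the
   DNF selects a unique term. *)
lemma bits_determine:
  fixes a b :: nat
  assumes "a < 2 ^ k" "b < 2 ^ k" and "\<forall>i<k. bit a i = bit b i"
  shows "a = b"
proof -
  have "take_bit k a = a" "take_bit k b = b"
    using assms(1,2) by (simp_all add: take_bit_nat_eq_self_iff)
  then show ?thesis
    using assms(3) by (metis bit_eqI bit_take_bit_iff)
qed

definition literal :: "nat \<Rightarrow> nat \<Rightarrow> formula" where
  "literal j i = (if bit j i then Var i else Neg (Var i))"

lemma eval_literal [simp]: "eval (literal j i) x \<longleftrightarrow> x i = bit j i"
  by (simp add: literal_def)

definition dnf_term :: "nat \<Rightarrow> nat \<Rightarrow> nat set \<Rightarrow> formula" where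
  "dnf_term k j T = AndG (map (literal j) [0..<k] @ map Var (sorted_list_of_set T))"

definition dnf :: "nat \<Rightarrow> nat \<Rightarrow> (nat \<Rightarrow> nat set) \<Rightarrow> formula" where
  "dnf k m S = collapse False (map (\<lambda>j. dnf_term k j (S j)) [0..<m])"

lemma eval_dnf_term:
  "finite T \<Longrightarrow> eval (dnf_term k j T) x \<longleftrightarrow> (\<forall>i<k. x i = bit j i) \<and> (\<forall>i\<in>T. x i)"
  by (auto simp: dnf_term_def ball_Un)

lemma vars_dnf_term: "finite T \<Longrightarrow> vars (dnf_term k j T) \<subseteq> {..<k} \<union> T"
  by (auto simp: dnf_term_def literal_def)

lemma gates_dnf_term: "gates (dnf_term k j T) = 1"
proof -
  have "\<forall>\<phi>\<in>set (map (literal j) [0..<k] @ map Var (sorted_list_of_set T)). gates \<phi> = 0"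
    by (auto simp: literal_def)
  then show ?thesis
    unfolding dnf_term_def by (simp add: sum_list_eq_0_iff del: map_append)
qed

lemma eval_dnf:
  "(\<forall>j<m. finite (S j)) \<Longrightarrow>
     eval (dnf k m S) x \<longleftrightarrow> (\<exists>j<m. (\<forall>i<k. x i = bit j i) \<and> (\<forall>i\<in>S j. x i))"
  by (auto simp: dnf_def eval_dnf_term)

lemma vars_dnf:
  assumes "k \<le> n" and "\<forall>j<m. S j \<subseteq> {k..<n}"
  shows "vars (dnf k m S) \<subseteq> {..<n}"
proof -
  have "vars (dnf_term k j (S j)) \<subseteq> {..<n}" if "j < m" for j
  proof -
    have "finite (S j)" using assms(2) that finite_subset by blast
    then show ?thesis using vars_dnf_term[of "S j" k j] assms that by fastforce
  qed
  then show ?thesis by (force simp: dnf_def)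
qed

lemma gates_dnf:
  assumes "1 \<le> G"
  shows "gates (dnf k (max 1 (G - 1)) S) \<le> G"
proof (cases "G \<le> 2")
  case True
  then show ?thesis using assms by (simp add: dnf_def gates_dnf_term)
next
  case False
  then have "length (map (\<lambda>j. dnf_term k j (S j)) [0..<G - 1]) \<noteq> 1" by simp
  with False show ?thesis
    by (simp add: dnf_def collapse_Gate comp_def gates_dnf_term sum_list_triv)
qed

definition dnf_fun :: "nat \<Rightarrow> nat \<Rightarrow> (nat \<Rightarrow> nat set) \<Rightarrow> bool list \<Rightarrow> bool" where
  "dnf_fun k m S xs = eval (dnf k m S) (\<lambda>i. xs ! i)"

lemma computes_dnf:
  "k \<le> n \<Longrightarrow> \<forall>j<m. S j \<subseteq> {k..<n} \<Longrightarrow> computes n (dnf k m S) (dnf_fun k m S)"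
  by (simp add: computes_def dnf_fun_def vars_dnf)

lemma dnf_fun_witness:
  assumes "k \<le> n" "m \<le> 2 ^ k" and S: "\<forall>j<m. S j \<subseteq> {k..<n}" and "j < m"
  shows "dnf_fun k m S (map (\<lambda>i. if i < k then bit j i else i \<in> A) [0..<n]) \<longleftrightarrow> S j \<subseteq> A"
proof -
  define x where "x i = (if i < k then bit j i else i \<in> A)" for i
  have fin: "\<forall>j<m. finite (S j)" using S finite_subset by blast
  have "dnf_fun k m S (map x [0..<n]) = eval (dnf k m S) x"
    unfolding dnf_fun_def using vars_dnf[OF assms(1) S] by (intro eval_cong_vars) auto
  also have "\<dots> \<longleftrightarrow> (\<exists>j'<m. (\<forall>i<k. bit j i = bit j' i) \<and> (\<forall>i\<in>S j'. x i))"
    using fin by (simp add: eval_dnf x_def)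
  also have "\<dots> \<longleftrightarrow> (\<forall>i\<in>S j. x i)"
  proof
    assume "\<exists>j'<m. (\<forall>i<k. bit j i = bit j' i) \<and> (\<forall>i\<in>S j'. x i)"
    then obtain j' where j': "j' < m" "\<forall>i<k. bit j i = bit j' i" "\<forall>i\<in>S j'. x i"
      by blast
    with assms(2,4) have "j = j'"
      by (intro bits_determine[of j k j']) simp_all
    with j' show "\<forall>i\<in>S j. x i" by simp
  qed (use assms(4) in blast)
  also have "\<dots> \<longleftrightarrow> S j \<subseteq> A"
  proof -
    have "x i \<longleftrightarrow> i \<in> A" if "i \<in> S j" for i
      using S assms(4) that by (force simp: x_def)
    then show ?thesis by blast
  qed
  finally show ?thesis unfolding x_def .
qed

lemma dnf_family_distinct:
  assumes "k \<le> n" "m \<le> 2 ^ k"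
  shows "inj_on (\<lambda>S. restrict_cube n (dnf_fun k m S)) (\<Pi>\<^sub>E j\<in>{..<m}. Pow {k..<n})"
proof (rule inj_onI)
  fix S T
  assume S: "S \<in> (\<Pi>\<^sub>E j\<in>{..<m}. Pow {k..<n})" and T: "T \<in> (\<Pi>\<^sub>E j\<in>{..<m}. Pow {k..<n})"
    and eq: "restrict_cube n (dnf_fun k m S) = restrict_cube n (dnf_fun k m T)"
  show "S = T"
  proof (rule PiE_ext[OF S T])
    fix j assume j: "j \<in> {..<m}"
    have "S j \<subseteq> A \<longleftrightarrow> T j \<subseteq> A" for A
      using fun_cong[OF eq, of "map (\<lambda>i. if i < k then bit j i else i \<in> A) [0..<n]"]
        dnf_fun_witness[OF assms, of S j A] dnf_fun_witness[OF assms, of T j A] S T j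
      by (auto simp: restrict_cube_def PiE_iff)
    then show "S j = T j" by blast
  qed
qed

lemma hard_dnf_exists:
  assumes "k \<le> n" "m \<le> 2 ^ k" and many: "(n + 4) ^ (8 * s + 3) < 2 ^ ((n - k) * m)"
  shows "\<exists>S. (\<forall>j<m. S j \<subseteq> {k..<n}) \<and> (\<forall>\<psi>. computes n \<psi> (dnf_fun k m S) \<longrightarrow> s < fsize \<psi>)"
proof (rule ccontr)
  let ?I = "\<Pi>\<^sub>E j\<in>{..<m}. Pow {k..<n}"
  assume no_hard: "\<not> ?thesis"
  have "\<exists>\<psi>. computes n \<psi> (dnf_fun k m S) \<and> fsize \<psi> \<le> s" if "S \<in> ?I" for S
  proof -
    have "\<forall>j<m. S j \<subseteq> {k..<n}" using that by (simp add: PiE_iff)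
    with no_hard show ?thesis by (auto simp: not_less)
  qed
  then have "card ?I \<le> (n + 4) ^ (8 * s + 3)"
    using card_small_size_family dnf_family_distinct[OF assms(1,2)] by (metis (no_types))
  moreover have "card ?I = 2 ^ ((n - k) * m)"
    by (simp add: card_PiE card_Pow power_mult)
  ultimately show False using many by simp
qed

section \<open>The numerical estimate and the theorem\<close>

lemma ln_2_ge_half: "1 / 2 \<le> ln (2::real)"
  using ln_le_minus_one[of "inverse 2"] ln_inverse[of 2] by simp

(* With k = n div 4 + 1, m = max 1 (G - 1) and s = nG / (800 ln n) the family is
   larger than the number of small formulas: ln of the left side is at most
   nG/50 + 3n/100 \<le> nG/20, while ln of the right side is at least (nG/4) ln 2. *)
lemma many_functions_beat_small_formulas:
  fixes n G :: nat
  assumes n: "4 \<le> n" and ln_n4: "ln (real n + 4) \<le> 2 * ln (real n)" "ln (real n + 4) \<le> real n / 100"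
    and G: "1 \<le> G"
  defines "X \<equiv> 1/800 * real n * real G / ln (real n)"
  shows "(n + 4) ^ (8 * nat \<lfloor>X\<rfloor> + 3) < 2 ^ ((n - (n div 4 + 1)) * max 1 (G - 1))"
proof -
  define e where "e = 8 * nat \<lfloor>X\<rfloor> + 3"
  define a where "a = (n - (n div 4 + 1)) * max 1 (G - 1)"
  have ln_n: "ln (real n) > 0" using n by simp
  have X: "X \<ge> 0" "X * ln (real n) = real n * real G / 800"
    using ln_n by (simp_all add: X_def)
  have "n \<le> 2 * (n - (n div 4 + 1))"
    using n by presburger
  then have "real n \<le> 2 * real (n - (n div 4 + 1))"
    by (metis of_nat_le_iff of_nat_mult of_nat_numeral)
  moreover have "real G \<le> 2 * real (max 1 (G - 1))"
    by (simp add: max_def, arith)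
  ultimately have "real n * real G \<le> (2 * real (n - (n div 4 + 1))) * (2 * real (max 1 (G - 1)))"
    by (rule mult_mono) simp_all
  then have a: "real n * real G / 4 \<le> real a"
    unfolding a_def by simp
  have "real e * ln (real n + 4) \<le> (8 * X + 3) * ln (real n + 4)"
    using of_nat_floor[OF X(1)] n by (intro mult_right_mono) (simp_all add: e_def)
  also have "\<dots> \<le> 8 * X * (2 * ln (real n)) + 3 * (real n / 100)"
  proof -
    have "8 * X * ln (real n + 4) \<le> 8 * X * (2 * ln (real n))"
      using ln_n4(1) X(1) by (intro mult_left_mono) simp_all
    then show ?thesis using ln_n4(2) by (simp only: distrib_right)
  qed
  also have "\<dots> = 16 * (X * ln (real n)) + 3 * real n / 100"
    by (simp add: mult.assoc mult.left_commute)
  also have "\<dots> = real n * real G / 50 + 3 * real n / 100"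
    using X(2) by simp
  also have "\<dots> < real n * real G / 4 * ln 2"
  proof -
    have nG: "real n \<le> real n * real G" "0 < real n * real G"
      using n G by simp_all
    have "real n * real G / 8 \<le> real n * real G / 4 * ln 2"
      using mult_left_mono[OF ln_2_ge_half, of "real n * real G / 4"] nG(2) by simp
    with nG show ?thesis by linarith
  qed
  also have "\<dots> \<le> real a * ln 2"
    by (rule mult_right_mono[OF a]) simp
  also have "real a * ln 2 = ln (2 ^ a)"
    by (rule ln_realpow[symmetric])
  finally have "ln ((real n + 4) ^ e) < ln (2 ^ a)"
    using ln_realpow[of "real n + 4" e] by simp
  then have "real ((n + 4) ^ e) < real (2 ^ a)"
    by (subst (asm) ln_less_cancel_iff) simp_all
  then show ?thesis
    unfolding e_def a_def by (simp only: of_nat_less_iff)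
qed

(* A crude bound on the logarithm, enough to see that ln grows slower than linearly. *)
lemma ln_le_two_sqrt:
  assumes "0 < x"
  shows "ln x \<le> 2 * sqrt x"
proof -
  have "ln x = 2 * ln (sqrt x)" using assms by (simp add: ln_sqrt)
  also have "\<dots> \<le> 2 * (sqrt x - 1)" using assms ln_le_minus_one[of "sqrt x"] by simp
  also have "\<dots> \<le> 2 * sqrt x" by simp
  finally show ?thesis .
qed

lemma log_estimates:
  fixes n :: nat
  assumes "50000 \<le> n"
  shows "ln (real n + 4) \<le> 2 * ln (real n)" and "ln (real n + 4) \<le> real n / 100"
proof -
  have N: "50000 \<le> real n" using assms by simp
  have sq: "50000 * real n \<le> real n * real n"
    using N by (intro mult_right_mono) simp_all
  have "real n + 4 \<le> real n * real n" using N sq by linarith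
  then have "ln (real n + 4) \<le> ln (real n * real n)"
    by simp
  then show "ln (real n + 4) \<le> 2 * ln (real n)"
    using N by (simp add: ln_mult)
  have "(real n / 200)\<^sup>2 = real n * real n / 40000"
    by (simp add: power2_eq_square)
  then have "real n + 4 \<le> (real n / 200)\<^sup>2"
    using N sq by linarith
  then have "sqrt (real n + 4) \<le> real n / 200"
    by (rule real_le_lsqrt[rotated]) simp
  moreover have "ln (real n + 4) \<le> 2 * sqrt (real n + 4)"
    by (rule ln_le_two_sqrt) simp
  ultimately show "ln (real n + 4) \<le> real n / 100" by simp
qed

lemma hard_function:
  fixes n G :: nat
  assumes n: "50000 \<le> n" and G: "1 \<le> G" "real G \<le> 2 powr (real n / 4)"
  shows "\<exists>f :: bool list \<Rightarrow> bool.
           (\<exists>\<phi>. computes n \<phi> f \<and> gates \<phi> \<le> G) \<and>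
           (\<forall>\<psi>. computes n \<psi> f \<longrightarrow> real (fsize \<psi>) \<ge> 1/800 * real n * real G / ln (real n))"
proof -
  define k where "k = n div 4 + 1"
  define m where "m = max 1 (G - 1)"
  define X where "X = 1/800 * real n * real G / ln (real n)"
  have k: "k \<le> n" using n by (simp add: k_def)
  have "real G \<le> 2 ^ k"
  proof -
    have "real n / 4 \<le> real k" unfolding k_def by linarith
    then have "2 powr (real n / 4) \<le> 2 ^ k" by (simp add: powr_realpow[symmetric])
    with G(2) show ?thesis by linarith
  qed
  then have "G \<le> 2 ^ k" by (metis of_nat_le_iff of_nat_numeral of_nat_power)
  then have m: "m \<le> 2 ^ k" using G(1) by (simp add: m_def)
  have "(n + 4) ^ (8 * nat \<lfloor>X\<rfloor> + 3) < 2 ^ ((n - k) * m)"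
    unfolding k_def m_def X_def
    by (rule many_functions_beat_small_formulas) (use n log_estimates[OF n] G(1) in auto)
  then obtain S where S: "\<forall>j<m. S j \<subseteq> {k..<n}"
    and hard: "\<forall>\<psi>. computes n \<psi> (dnf_fun k m S) \<longrightarrow> nat \<lfloor>X\<rfloor> < fsize \<psi>"
    using hard_dnf_exists[OF k m] by blast
  show ?thesis
  proof (intro exI conjI allI impI)
    show "computes n (dnf k m S) (dnf_fun k m S)" by (rule computes_dnf[OF k S])
    show "gates (dnf k m S) \<le> G" unfolding m_def by (rule gates_dnf[OF G(1)])
  next
    fix \<psi> assume "computes n \<psi> (dnf_fun k m S)"
    with hard have "\<not> fsize \<psi> \<le> nat \<lfloor>X\<rfloor>" by auto
    then show "1/800 * real n * real G / ln (real n) \<le> real (fsize \<psi>)"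
      using le_nat_floor[of "fsize \<psi>" X] unfolding X_def by linarith
  qed
qed

theorem proposition1:
  shows "\<exists>c::real. c > 0 \<and> (\<exists>n0::nat. \<forall>n\<ge>n0. \<forall>G::nat.
           1 \<le> G \<and> real G \<le> 2 powr (real n / 4) \<longrightarrow>
           (\<exists>f :: bool list \<Rightarrow> bool.
              (\<exists>\<phi>. computes n \<phi> f \<and> gates \<phi> \<le> G) \<and>
              (\<forall>\<psi>. computes n \<psi> f \<longrightarrow> real (fsize \<psi>) \<ge> c * real n * real G / ln (real n))))"
  using hard_function by (intro exI[of _ "1/800"] conjI exI[of _ 50000]) auto

end
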